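(* For every integer $k\ge 4$, the set $S_k$ is not complete, and there exists an uncompletable word for $S_k$ of length $5k^2-17k+13$.
   Context: $\Sigma=\{a,b\}$. $S_k=\left(\Sigma^k\setminus\{ba^{k-1},b^{k-1}a\}\right)\cup\left(\Sigma^{k-1}\setminus\{a^{k-1},b^{k-1}\}\right)$. For a finite set $S$ of words, $\mathit{Fact}(S^* )$ is the set of all factors of words in $S^*$. $S$ is complete if $\mathit{Fact}(S^* )=\Sigma^*$; a word $w\in\Sigma^*\setminus\mathit{Fact}(S^* )$ is called uncompletable for $S$. *)

theory Defs
  imports Main
begin

datatype sym = a | b

type_synonym word = "sym list"

definition words_of_len :: "nat \<Rightarrow> word set" where
  "words_of_len n = {w. length w = n}"

definition S :: "nat \<Rightarrow> word set" where
  "S k = (words_of_len k - {b # replicate (k - 1) a, replicate (k - 1) b @ [a]})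
       \<union> (words_of_len (k - 1) - {replicate (k - 1) a, replicate (k - 1) b})"

definition star :: "word set \<Rightarrow> word set" where
  "star L = {concat ws | ws. set ws \<subseteq> L}"

definition Fact :: "word set \<Rightarrow> word set" where
  "Fact L = {w. \<exists>x\<in>L. \<exists>u v. x = u @ w @ v}"

definition complete :: "word set \<Rightarrow> bool" where
  "complete L \<longleftrightarrow> Fact (star L) = UNIV"

definition uncompletable :: "word set \<Rightarrow> word \<Rightarrow> bool" where
  "uncompletable L w \<longleftrightarrow> w \<notin> Fact (star L)"

end

theory Submission imports Defs begin

(* A word w is a factor of a word in S_k^* iff it can be cut into
   pieces from S_k, except that the first and the last piece may stick out of w.
   Every piece has length k-1 or k, so the first cut inside w lies before
   position k, and each further cut lies k-1 or k positions after the previous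
   one.  Hence w is uncompletable as soon as there is a set I of positions of w
   (the "possible cuts") that contains 0..k-1, is closed under jumping over a
   factor of w lying in S_k, and never comes within k of the end of w. *)


section \<open>A criterion for uncompletability by cut positions\<close>

lemma cut_propagation:
  assumes k: "0 < k"
    and short: "\<And>x. x \<in> L \<Longrightarrow> length x \<le> k"
    and room: "\<And>p. I p \<Longrightarrow> p + k \<le> length w"
    and step: "\<And>p n. I p \<Longrightarrow> p + n \<le> length w \<Longrightarrow> take n (drop p w) \<in> L \<Longrightarrow> I (p + n)"
  shows "I p \<Longrightarrow> set ws \<subseteq> L \<Longrightarrow> concat ws \<noteq> drop p w @ v"
proof (induction ws arbitrary: p)
  case Nil
  then show ?case using room[OF Nil(1)] k by auto
next
  case (Cons s ws)
  have s: "s \<in> L" and ws: "set ws \<subseteq> L" using Cons.prems(2) by auto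
  show ?case
  proof
    assume eq: "concat (s # ws) = drop p w @ v"
    have fits: "p + length s \<le> length w" using room[OF Cons.prems(1)] short[OF s] by simp
    then have "take (length s) (drop p w) = s"
      using arg_cong[OF eq, of "take (length s)"] by simp
    then have "I (p + length s)" using step[OF Cons.prems(1) fits] s by simp
    moreover have "concat ws = drop (p + length s) w @ v"
      using arg_cong[OF eq, of "drop (length s)"] fits by (simp add: add.commute)
    ultimately show False using Cons.IH ws by blast
  qed
qed

lemma first_cut:
  assumes short: "\<And>x. x \<in> L \<Longrightarrow> length x \<le> k"
    and long: "k \<le> length w" and k: "0 < k"
  shows "set ws \<subseteq> L \<Longrightarrow> concat ws = u @ w @ v
          \<Longrightarrow> \<exists>p<k. \<exists>ws'. set ws' \<subseteq> L \<and> concat ws' = drop p w @ v"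
proof (induction ws arbitrary: u)
  case Nil
  then have "set [] \<subseteq> L" "concat [] = drop 0 w @ v" by auto
  then show ?case using k by blast
next
  case (Cons s ws)
  have s: "s \<in> L" and ws: "set ws \<subseteq> L" using Cons.prems(1) by auto
  have rest: "concat ws = drop (length s) (u @ w @ v)"
    using arg_cong[OF Cons.prems(2), of "drop (length s)"] by simp
  consider "u = []" | "u \<noteq> []" "length s \<le> length u" | "u \<noteq> []" "length u < length s"
    by linarith
  then show ?case
  proof cases
    case 1
    then have "concat (s # ws) = drop 0 w @ v" using Cons.prems(2) by simp
    then show ?thesis using Cons.prems(1) k by blast
  next
    case 2
    then show ?thesis using Cons.IH[OF ws] rest by simp
  next
    case 3
    then have "length s - length u < k" using short[OF s] length_greater_0_conv[of u] by linarith
    moreover have "concat ws = drop (length s - length u) w @ v"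
      using 3 calculation long rest by simp
    ultimately show ?thesis using ws by blast
  qed
qed

lemma not_factor_by_cuts:
  assumes k: "0 < k"
    and short: "\<And>x. x \<in> L \<Longrightarrow> length x \<le> k"
    and start: "\<And>p. p < k \<Longrightarrow> I p"
    and room: "\<And>p. I p \<Longrightarrow> p + k \<le> length w"
    and step: "\<And>p n. I p \<Longrightarrow> p + n \<le> length w \<Longrightarrow> take n (drop p w) \<in> L \<Longrightarrow> I (p + n)"
  shows "w \<notin> Fact (star L)"
proof
  assume "w \<in> Fact (star L)"
  then obtain ws u v where "set ws \<subseteq> L" "concat ws = u @ w @ v"
    unfolding Fact_def star_def by blast
  moreover have "k \<le> length w" using room[OF start[OF k]] by simp
  ultimately obtain p ws' where "p < k" "set ws' \<subseteq> L" "concat ws' = drop p w @ v"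
    using first_cut[OF short _ k] by blast
  then show False using cut_propagation[where I = I, OF k short room step] start by blast
qed


section \<open>The factors excluded from S_k\<close>

lemma length_S: "x \<in> S k \<Longrightarrow> length x = k \<or> length x = k - 1"
  by (auto simp: S_def words_of_len_def)

lemma map_const_run: "(\<And>j. x \<le> j \<Longrightarrow> j < x + n \<Longrightarrow> f j = c) \<Longrightarrow> map f [x..<x + n] = replicate n c"
  by (rule nth_equalityI) auto

lemma run_not_in_S:
  assumes "0 < k" "\<And>j. x \<le> j \<Longrightarrow> j < x + (k - 1) \<Longrightarrow> f j = c"
  shows "map f [x..<x + (k - 1)] \<notin> S k"
  using map_const_run[of x "k - 1" f c, OF assms(2)] assms(1)
  by (cases c) (auto simp: S_def words_of_len_def)

lemma b_then_a_run_not_in_S: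
  assumes "0 < k" "f x = b" "\<And>j. x < j \<Longrightarrow> j < x + k \<Longrightarrow> f j = a"
  shows "map f [x..<x + k] \<notin> S k"
proof -
  have "[x..<x + k] = x # [Suc x..<Suc x + (k - 1)]" using assms(1) by (simp add: upt_conv_Cons)
  moreover have "map f [Suc x..<Suc x + (k - 1)] = replicate (k - 1) a"
    using assms(3) by (intro map_const_run) auto
  ultimately show ?thesis using assms(1,2) by (auto simp: S_def words_of_len_def)
qed

lemma b_run_then_a_not_in_S:
  assumes "0 < k" "\<And>j. x \<le> j \<Longrightarrow> j < x + (k - 1) \<Longrightarrow> f j = b" "f (x + (k - 1)) = a"
  shows "map f [x..<x + k] \<notin> S k"
proof -
  have "[x..<x + k] = [x..<x + (k - 1)] @ [x + (k - 1)]"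
    using assms(1) by (metis Suc_pred' add_Suc_right upt_Suc_append le_add1)
  moreover have "map f [x..<x + (k - 1)] = replicate (k - 1) b"
    using assms(2) by (rule map_const_run)
  ultimately show ?thesis using assms(1,3) by (auto simp: S_def words_of_len_def)
qed


section \<open>The witness word\<close>

text \<open>Block i of the witness (1 \<le> i \<le> k-3) is a^(k+i) b^(2k-3-i) a^k b^(k-1), a word
  of length 5k-4; blk_letter k i s is its letter at offset s.\<close>
definition blk_letter :: "nat \<Rightarrow> nat \<Rightarrow> nat \<Rightarrow> sym" where
  "blk_letter k i s =
     (if s < k + i then a else if s < 3*k - 3 then b else if s < 4*k - 3 then a else b)"

text \<open>The blocks follow the prefix b a^k b^(k-1) of length 2k.\<close>
definition blk_start :: "nat \<Rightarrow> nat \<Rightarrow> nat" where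
  "blk_start k i = 2*k + (i - 1) * (5*k - 4)"

text \<open>The letter at position n of the witness: prefix, blocks 1..k-3, and a final a
  at position blk_start k (k-2), where a further block would start.\<close>
definition letter :: "nat \<Rightarrow> nat \<Rightarrow> sym" where
  "letter k n =
     (if n = 0 then b else if n \<le> k then a else if n < 2*k then b
      else if n < blk_start k (k - 2)
        then blk_letter k ((n - 2*k) div (5*k - 4) + 1) ((n - 2*k) mod (5*k - 4))
      else a)"

definition witness :: "nat \<Rightarrow> word" where
  "witness k = map (letter k) [0..<blk_start k (k - 2) + 1]"

lemma length_witness: "length (witness k) = blk_start k (k - 2) + 1"
  by (simp add: witness_def)

lemma window_witness:
  "p + n \<le> length (witness k) \<Longrightarrow> take n (drop p (witness k)) = map (letter k) [p..<p + n]"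
  by (simp add: witness_def drop_map take_map take_upt del: upt_Suc)

lemma blk_start_1: "blk_start k 1 = 2*k"
  by (simp add: blk_start_def)

lemma blk_start_Suc: "1 \<le> i \<Longrightarrow> blk_start k (Suc i) = blk_start k i + (5*k - 4)"
  by (cases i) (simp_all add: blk_start_def)

lemma blk_start_mono: "i \<le> j \<Longrightarrow> blk_start k i \<le> blk_start k j"
  by (simp add: blk_start_def mult_le_mono1 diff_le_mono)

lemma letter_prefix:
  "letter k 0 = b" "0 < n \<Longrightarrow> n \<le> k \<Longrightarrow> letter k n = a" "k < n \<Longrightarrow> n < 2*k \<Longrightarrow> letter k n = b"
  by (simp_all add: letter_def)

lemma letter_block:
  assumes k: "4 \<le> k" and i: "1 \<le> i" "i \<le> k - 3" and s: "s < 5*k - 4"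
  shows "letter k (blk_start k i + s) = blk_letter k i s"
proof -
  let ?M = "5*k - 4"
  have "blk_start k (Suc i) \<le> blk_start k (k - 2)" using i by (intro blk_start_mono) simp
  then have inside: "blk_start k i + s < blk_start k (k - 2)" using blk_start_Suc[OF i(1)] s by simp
  have "blk_start k i + s - 2*k = (i - 1) * ?M + s" by (simp add: blk_start_def)
  moreover have "((i - 1) * ?M + s) div ?M = i - 1" "((i - 1) * ?M + s) mod ?M = s" using s by simp_all
  ultimately show ?thesis using inside i k by (simp add: letter_def blk_start_def)
qed

lemma letter_end: "0 < k \<Longrightarrow> letter k (blk_start k (k - 2)) = a"
  by (simp add: letter_def blk_start_def)

lemma block_letters:
  assumes k: "4 \<le> k" and i: "1 \<le> i" "i \<le> k - 3"
  shows "s < k + i \<Longrightarrow> letter k (blk_start k i + s) = a"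
    and "k + i \<le> s \<Longrightarrow> s < 3*k - 3 \<Longrightarrow> letter k (blk_start k i + s) = b"
    and "3*k - 3 \<le> s \<Longrightarrow> s < 4*k - 3 \<Longrightarrow> letter k (blk_start k i + s) = a"
    and "4*k - 3 \<le> s \<Longrightarrow> s < 5*k - 4 \<Longrightarrow> letter k (blk_start k i + s) = b"
    and "i < k - 3 \<Longrightarrow> s < k + i + 1 \<Longrightarrow> letter k (blk_start k i + (5*k - 4 + s)) = a"
    and "letter k (blk_start k i + (5*k - 4)) = a"
proof -
  have runs: "letter k (blk_start k i + s) = blk_letter k i s" if "s < 5*k - 4" for s
    using letter_block[OF k i that] .
  show "s < k + i \<Longrightarrow> letter k (blk_start k i + s) = a"
    and "k + i \<le> s \<Longrightarrow> s < 3*k - 3 \<Longrightarrow> letter k (blk_start k i + s) = b"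
    and "3*k - 3 \<le> s \<Longrightarrow> s < 4*k - 3 \<Longrightarrow> letter k (blk_start k i + s) = a"
    and "4*k - 3 \<le> s \<Longrightarrow> s < 5*k - 4 \<Longrightarrow> letter k (blk_start k i + s) = b"
    using runs i by (simp_all add: blk_letter_def)
  show "i < k - 3 \<Longrightarrow> s < k + i + 1 \<Longrightarrow> letter k (blk_start k i + (5*k - 4 + s)) = a"
    using letter_block[OF k _ _, of "Suc i" s] blk_start_Suc[OF i(1)]
    by (simp add: blk_letter_def add.assoc)
  show "letter k (blk_start k i + (5*k - 4)) = a"
  proof (cases "i = k - 3")
    case True
    then have "blk_start k i + (5*k - 4) = blk_start k (k - 2)"
      using blk_start_Suc[OF i(1)] k by (simp add: numeral_eq_Suc Suc_diff_Suc)
    then show ?thesis using letter_end k by simp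
  next
    case False
    then show ?thesis
      using letter_block[OF k _ _, of "Suc i" 0] blk_start_Suc[OF i(1)] i k
      by (simp add: blk_letter_def)
  qed
qed


section \<open>The possible cut positions of the witness\<close>

text \<open>Offsets t in block i at which a cut can occur: the cuts reachable from the
  prefix by pieces of length k-1 and k, as a union of intervals.  The last interval is
  omitted in the last block i = k-3, where it is not reached.\<close>
definition blk_cut :: "nat \<Rightarrow> nat \<Rightarrow> nat \<Rightarrow> bool" where
  "blk_cut k i t \<longleftrightarrow>
     (i \<le> t \<and> t \<le> k - 2) \<or> (k + i \<le> t \<and> t \<le> 2*k - 2) \<or> (2*k + i \<le> t \<and> t \<le> 3*k - 4) \<or>
     t = 3*k - 3 \<or> (3*k - 1 + i \<le> t \<and> t \<le> 4*k - 5) \<or> t = 4*k - 3 \<or>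
     (i \<le> k - 4 \<and> 4*k - 2 + i \<le> t \<and> t \<le> 5*k - 5)"

lemma blk_cutI:
  "i \<le> t \<Longrightarrow> t \<le> k - 2 \<Longrightarrow> blk_cut k i t"
  "k + i \<le> t \<Longrightarrow> t \<le> 2*k - 2 \<Longrightarrow> blk_cut k i t"
  "2*k + i \<le> t \<Longrightarrow> t \<le> 3*k - 4 \<Longrightarrow> blk_cut k i t"
  "t = 3*k - 3 \<Longrightarrow> blk_cut k i t"
  "3*k - 1 + i \<le> t \<Longrightarrow> t \<le> 4*k - 5 \<Longrightarrow> blk_cut k i t"
  "t = 4*k - 3 \<Longrightarrow> blk_cut k i t"
  "i \<le> k - 4 \<Longrightarrow> 4*k - 2 + i \<le> t \<Longrightarrow> t \<le> 5*k - 5 \<Longrightarrow> blk_cut k i t"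
  by (simp_all add: blk_cut_def)

definition cut :: "nat \<Rightarrow> nat \<Rightarrow> bool" where
  "cut k n \<longleftrightarrow> (n < 2*k \<and> n \<noteq> k) \<or>
     (\<exists>i t. 1 \<le> i \<and> i \<le> k - 3 \<and> t < 5*k - 4 \<and> n = blk_start k i + t \<and> blk_cut k i t)"

lemma cut_in_prefix: "n < 2*k \<Longrightarrow> n \<noteq> k \<Longrightarrow> cut k n"
  unfolding cut_def by blast

lemma cut_in_block:
  "1 \<le> i \<Longrightarrow> i \<le> k - 3 \<Longrightarrow> t < 5*k - 4 \<Longrightarrow> blk_cut k i t \<Longrightarrow> cut k (blk_start k i + t)"
  unfolding cut_def by blast

lemma cut_in_next_block:
  assumes "1 \<le> i" "i < k - 3" "t < 5*k - 4" "blk_cut k (Suc i) t"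
  shows "cut k (blk_start k i + (5*k - 4 + t))"
  using cut_in_block[of "Suc i" k t] blk_start_Suc[of i k] assms by (simp add: add.assoc)

lemma cut_in_first_block:
  assumes "4 \<le> k" "t < 5*k - 4" "blk_cut k 1 t"
  shows "cut k (2*k + t)"
  using cut_in_block[of 1 k t] assms unfolding blk_start_1 by simp

lemma cut_room:
  assumes k: "4 \<le> k" and p: "cut k p"
  shows "p + k \<le> length (witness k)"
proof -
  have last: "blk_start k (k - 3) + (5*k - 4) = blk_start k (k - 2)"
    using blk_start_Suc[of "k - 3" k] k by (simp add: numeral_eq_Suc Suc_diff_Suc)
  from p consider "p < 2*k"
    | i t where "1 \<le> i" "i \<le> k - 3" "p = blk_start k i + t" "blk_cut k i t"
    unfolding cut_def by blast
  then show ?thesis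
  proof cases
    case 1
    have "blk_start k 1 \<le> blk_start k (k - 3)" using k by (intro blk_start_mono) simp
    then show ?thesis using 1 last k by (simp add: length_witness blk_start_1)
  next
    case (2 i t)
    show ?thesis
    proof (cases "i = k - 3")
      case True
      then have "t \<le> 4*k - 3" using 2(4) k by (auto simp: blk_cut_def)
      then show ?thesis using 2 True last k by (simp add: length_witness)
    next
      case False
      have "t \<le> 5*k - 5" using 2(4) k by (auto simp: blk_cut_def)
      moreover have "blk_start k (Suc i) \<le> blk_start k (k - 3)"
        using False 2(2) by (intro blk_start_mono) simp
      ultimately show ?thesis using 2 last blk_start_Suc[OF 2(1)] k by (simp add: length_witness)
    qed
  qed
qed


section \<open>Closure of the possible cuts under pieces from S_k\<close>

lemma blk_cut_cases:
  assumes "blk_cut k i t"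
  obtains "i \<le> t" "t \<le> k - 2" | "k + i \<le> t" "t \<le> 2*k - 2" | "2*k + i \<le> t" "t \<le> 3*k - 4"
    | "t = 3*k - 3" | "3*k - 1 + i \<le> t" "t \<le> 4*k - 5" | "t = 4*k - 3"
    | "i \<le> k - 4" "4*k - 2 + i \<le> t" "t \<le> 5*k - 5"
  using assms unfolding blk_cut_def by blast

text \<open>Offsets in block i at which a piece of length k-1 from S_k cannot start,
  because it would be a^(k-1) or b^(k-1).\<close>
lemma block_short_piece_excluded:
  assumes k: "4 \<le> k" and i: "1 \<le> i" "i \<le> k - 3"
    and piece: "map (\<lambda>s. letter k (blk_start k i + s)) [t..<t + (k - 1)] \<in> S k"
  shows "t \<noteq> i" and "\<not> (k + i \<le> t \<and> t \<le> 2*k - 2)" and "t \<noteq> 3*k - 3" and "t \<noteq> 4*k - 3"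
proof -
  note run = block_letters[OF k i]
  have no_run: "\<not> (\<forall>s. t \<le> s \<longrightarrow> s < t + (k - 1) \<longrightarrow> letter k (blk_start k i + s) = c)" for c
    using run_not_in_S[of k t "\<lambda>s. letter k (blk_start k i + s)" c] piece k by auto
  show "t \<noteq> i" "t \<noteq> 3*k - 3" using no_run[of a] by (auto simp: run)
  show "\<not> (k + i \<le> t \<and> t \<le> 2*k - 2)" "t \<noteq> 4*k - 3" using no_run[of b] by (auto simp: run)
qed

text \<open>Offsets in block i at which a piece b a^(k-1) would start.\<close>
lemma block_long_piece_excluded_b_as:
  assumes k: "4 \<le> k" and i: "1 \<le> i" "i \<le> k - 3"
    and piece: "map (\<lambda>s. letter k (blk_start k i + s)) [t..<t + k] \<in> S k"
  shows "t \<noteq> 3*k - 4" and "i < k - 3 \<Longrightarrow> t \<noteq> 5*k - 5"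
proof -
  note run = block_letters[OF k i]
  have no_b_as: "\<not> (letter k (blk_start k i + t) = b \<and>
                     (\<forall>s. t < s \<longrightarrow> s < t + k \<longrightarrow> letter k (blk_start k i + s) = a))"
    using b_then_a_run_not_in_S[of k "\<lambda>s. letter k (blk_start k i + s)" t] piece k by auto
  show "t \<noteq> 3*k - 4"
  proof
    assume t: "t = 3*k - 4"
    have "letter k (blk_start k i + t) = b" using t i k by (intro run(2)) auto
    moreover have "\<forall>s. t < s \<longrightarrow> s < t + k \<longrightarrow> letter k (blk_start k i + s) = a"
      using t k by (auto simp: run)
    ultimately show False using no_b_as by blast
  qed
  show "t \<noteq> 5*k - 5" if "i < k - 3"
  proof
    assume t: "t = 5*k - 5"
    have "letter k (blk_start k i + t) = b" using t k by (intro run(4)) auto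
    moreover have "\<forall>s. t < s \<longrightarrow> s < t + k \<longrightarrow> letter k (blk_start k i + s) = a"
    proof (intro allI impI)
      fix s assume "t < s" "s < t + k"
      then have "s = 5*k - 4 + (s - (5*k - 4))" "s - (5*k - 4) < k + i + 1" using t k by auto
      then show "letter k (blk_start k i + s) = a" using run(5)[OF that] by metis
    qed
    ultimately show False using no_b_as by blast
  qed
qed

text \<open>Offsets in block i at which a piece b^(k-1) a would start.\<close>
lemma block_long_piece_excluded_bs_a:
  assumes k: "4 \<le> k" and i: "1 \<le> i" "i \<le> k - 3"
    and piece: "map (\<lambda>s. letter k (blk_start k i + s)) [t..<t + k] \<in> S k"
  shows "t \<noteq> 2*k - 2" and "t \<noteq> 4*k - 3"
proof -
  note run = block_letters[OF k i]
  have no_bs_a: "\<not> ((\<forall>s. t \<le> s \<longrightarrow> s < t + (k - 1) \<longrightarrow> letter k (blk_start k i + s) = b) \<and>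
                     letter k (blk_start k i + (t + (k - 1))) = a)"
    using b_run_then_a_not_in_S[of k t "\<lambda>s. letter k (blk_start k i + s)"] piece k by auto
  show "t \<noteq> 2*k - 2"
  proof
    assume t: "t = 2*k - 2"
    have "\<forall>s. t \<le> s \<longrightarrow> s < t + (k - 1) \<longrightarrow> letter k (blk_start k i + s) = b"
      using t i k by (auto simp: run)
    moreover have "letter k (blk_start k i + (t + (k - 1))) = a" using t k by (intro run(3)) auto
    ultimately show False using no_bs_a by blast
  qed
  show "t \<noteq> 4*k - 3"
  proof
    assume t: "t = 4*k - 3"
    have "\<forall>s. t \<le> s \<longrightarrow> s < t + (k - 1) \<longrightarrow> letter k (blk_start k i + s) = b"
      using t k by (auto simp: run)
    moreover have "t + (k - 1) = 5*k - 4" using t k by simp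
    ultimately show False using no_bs_a run(6) by simp
  qed
qed

lemma block_step_short:
  assumes k: "4 \<le> k" and i: "1 \<le> i" "i \<le> k - 3" and t: "blk_cut k i t" "t < 5*k - 4"
    and piece: "map (\<lambda>s. letter k (blk_start k i + s)) [t..<t + (k - 1)] \<in> S k"
  shows "cut k (blk_start k i + (t + (k - 1)))"
  using t(1)
proof (cases rule: blk_cut_cases)
  case 1
  with block_short_piece_excluded(1)[OF k i piece] k
  have "blk_cut k i (t + (k - 1))" "t + (k - 1) < 5*k - 4" by (auto intro: blk_cutI(2))
  then show ?thesis using cut_in_block[OF i] by blast
next
  case 2
  then show ?thesis using block_short_piece_excluded(2)[OF k i piece] by blast
next
  case 3
  with k have "blk_cut k i (t + (k - 1))" "t + (k - 1) < 5*k - 4" by (auto intro: blk_cutI(5))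
  then show ?thesis using cut_in_block[OF i] by blast
next
  case 4
  then show ?thesis using block_short_piece_excluded(3)[OF k i piece] by blast
next
  case 5
  with k have "blk_cut k i (t + (k - 1))" "t + (k - 1) < 5*k - 4" by (auto intro: blk_cutI(7))
  then show ?thesis using cut_in_block[OF i] by blast
next
  case 6
  then show ?thesis using block_short_piece_excluded(4)[OF k i piece] by blast
next
  case 7
  with k have "blk_cut k (Suc i) (t + (k - 1) - (5*k - 4))" "t + (k - 1) - (5*k - 4) < 5*k - 4"
    by (auto intro: blk_cutI(1))
  moreover have "t + (k - 1) = 5*k - 4 + (t + (k - 1) - (5*k - 4))" "i < k - 3" using 7 k by auto
  ultimately show ?thesis using cut_in_next_block[OF i(1)] by metis
qed

lemma block_step_long:
  assumes k: "4 \<le> k" and i: "1 \<le> i" "i \<le> k - 3" and t: "blk_cut k i t" "t < 5*k - 4"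
    and piece: "map (\<lambda>s. letter k (blk_start k i + s)) [t..<t + k] \<in> S k"
  shows "cut k (blk_start k i + (t + k))"
  using t(1)
proof (cases rule: blk_cut_cases)
  case 1
  with k have "blk_cut k i (t + k)" "t + k < 5*k - 4" by (auto intro: blk_cutI(2))
  then show ?thesis using cut_in_block[OF i] by blast
next
  case 2
  have "t \<noteq> 2*k - 2" using block_long_piece_excluded_bs_a(1)[OF k i piece] .
  with 2 k have "blk_cut k i (t + k)" by (cases "t + k \<le> 3*k - 4") (auto intro: blk_cutI(3,4))
  moreover have "t + k < 5*k - 4" using 2 k by simp
  ultimately show ?thesis using cut_in_block[OF i] by blast
next
  case 3
  with block_long_piece_excluded_b_as(1)[OF k i piece] k
  have "blk_cut k i (t + k)" "t + k < 5*k - 4" by (auto intro: blk_cutI(5))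
  then show ?thesis using cut_in_block[OF i] by blast
next
  case 4
  with k have "blk_cut k i (t + k)" "t + k < 5*k - 4" by (auto intro: blk_cutI(6))
  then show ?thesis using cut_in_block[OF i] by blast
next
  case 5
  with k have "blk_cut k i (t + k)" "t + k < 5*k - 4" by (auto intro: blk_cutI(7))
  then show ?thesis using cut_in_block[OF i] by blast
next
  case 6
  then show ?thesis using block_long_piece_excluded_bs_a(2)[OF k i piece] by blast
next
  case 7
  moreover have next_block: "i < k - 3" using 7 k by auto
  moreover have "t \<noteq> 5*k - 5" using block_long_piece_excluded_b_as(2)[OF k i piece next_block] .
  ultimately have "blk_cut k (Suc i) (t + k - (5*k - 4))" "t + k - (5*k - 4) < 5*k - 4"
    using k by (auto intro: blk_cutI(1))
  moreover have "t + k = 5*k - 4 + (t + k - (5*k - 4))" using 7 k by auto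
  ultimately show ?thesis using cut_in_next_block[OF i(1) next_block] by metis
qed

text \<open>A piece of length k-1 from S_k starting at a possible cut in the prefix
  b a^k b^(k-1) ends at a possible cut; the starts 1 and k+1 would give a^(k-1), b^(k-1).\<close>
lemma prefix_step_short:
  assumes k: "4 \<le> k" and p: "p < 2*k" "p \<noteq> k"
    and piece: "map (letter k) [p..<p + (k - 1)] \<in> S k"
  shows "cut k (p + (k - 1))"
proof -
  have no_run: "\<not> (\<forall>j. p \<le> j \<longrightarrow> j < p + (k - 1) \<longrightarrow> letter k j = c)" for c
    using run_not_in_S[of k p "letter k" c] piece k by auto
  consider "p = 1" | "p = k + 1" | "p \<le> k - 1" "p \<noteq> 1" | "k + 2 \<le> p" using p by linarith
  then show ?thesis
  proof cases
    case 1
    then show ?thesis using no_run[of a] by (auto simp: letter_prefix)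
  next
    case 2
    then show ?thesis using no_run[of b] p by (auto simp: letter_prefix)
  next
    case 3
    then have "p + (k - 1) < 2*k" "p + (k - 1) \<noteq> k" using k by auto
    then show ?thesis by (rule cut_in_prefix)
  next
    case 4
    then have "p + (k - 1) = 2*k + (p - (k + 1))" using k by simp
    moreover have "blk_cut k 1 (p - (k + 1))" "p - (k + 1) < 5*k - 4"
      using 4 p k by (auto intro: blk_cutI(1))
    ultimately show ?thesis using cut_in_first_block[OF k] by metis
  qed
qed

text \<open>A piece of length k from S_k starting at a possible cut in the prefix ends at a
  possible cut; the starts 0 and 2k-1 would give b a^(k-1).\<close>
lemma prefix_step_long:
  assumes k: "4 \<le> k" and p: "p < 2*k" "p \<noteq> k"
    and piece: "map (letter k) [p..<p + k] \<in> S k"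
  shows "cut k (p + k)"
proof -
  have no_b_as: "\<not> (letter k p = b \<and> (\<forall>j. p < j \<longrightarrow> j < p + k \<longrightarrow> letter k j = a))"
    using b_then_a_run_not_in_S[of k "letter k" p] piece k by auto
  consider "p = 0" | "p = 2*k - 1" | "0 < p" "p < k" | "k < p" "p < 2*k - 1" using p by linarith
  then show ?thesis
  proof cases
    case 1
    then show ?thesis using no_b_as by (auto simp: letter_prefix)
  next
    case 2
    have block_1: "letter k (2*k + s) = a" if "s < k + 1" for s
      using block_letters(1)[OF k order.refl, of s] that k unfolding blk_start_1 by simp
    have "\<forall>j. p < j \<longrightarrow> j < p + k \<longrightarrow> letter k j = a"
    proof (intro allI impI)
      fix j assume "p < j" "j < p + k"
      then have "j = 2*k + (j - 2*k)" "j - 2*k < k + 1" using 2 k by auto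
      then show "letter k j = a" using block_1 by metis
    qed
    moreover have "letter k p = b" using 2 k by (simp add: letter_prefix)
    ultimately show ?thesis using no_b_as by blast
  next
    case 3
    then have "p + k < 2*k" "p + k \<noteq> k" by auto
    then show ?thesis by (rule cut_in_prefix)
  next
    case 4
    then have "p + k = 2*k + (p - k)" by simp
    moreover have "blk_cut k 1 (p - k)" "p - k < 5*k - 4" using 4 k by (auto intro: blk_cutI(1))
    ultimately show ?thesis using cut_in_first_block[OF k] by metis
  qed
qed

lemma map_upt_shift: "map f [q + x..<q + y] = map (\<lambda>s. f (q + s)) [x..<y]"
  by (induction y) auto

lemma cut_step:
  assumes k: "4 \<le> k" and p: "cut k p" and fits: "p + n \<le> length (witness k)"
    and piece: "take n (drop p (witness k)) \<in> S k"
  shows "cut k (p + n)"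
proof -
  have piece': "map (letter k) [p..<p + n] \<in> S k" using piece window_witness[OF fits] by simp
  then have n: "n = k - 1 \<or> n = k" using length_S by fastforce
  from p consider "p < 2*k" "p \<noteq> k"
    | i t where "1 \<le> i" "i \<le> k - 3" "t < 5*k - 4" "p = blk_start k i + t" "blk_cut k i t"
    unfolding cut_def by blast
  then show ?thesis
  proof cases
    case 1
    then show ?thesis using n piece' prefix_step_short[OF k] prefix_step_long[OF k] by blast
  next
    case (2 i t)
    have "map (\<lambda>s. letter k (blk_start k i + s)) [t..<t + n] \<in> S k"
      using piece' map_upt_shift[of "letter k" "blk_start k i" t "t + n"] 2(4)
      by (simp add: add.assoc)
    then show ?thesis
      using n 2 block_step_short[OF k 2(1,2,5,3)] block_step_long[OF k 2(1,2,5,3)]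
      by (auto simp: add.assoc)
  qed
qed

lemma length_witness_formula:
  assumes "4 \<le> k"
  shows "int (length (witness k)) = 5 * int k ^ 2 - 17 * int k + 13"
proof -
  obtain m where m: "k = m + 4" using assms le_Suc_ex add.commute by metis
  have "length (witness k) = 5*m*m + 23*m + 25"
    unfolding length_witness blk_start_def m by (simp add: algebra_simps)
  then show ?thesis unfolding m by (simp add: algebra_simps power2_eq_square)
qed


theorem theorem1:
  fixes k :: nat
  assumes "k \<ge> 4"
  shows "\<not> complete (S k) \<and>
         (\<exists>w. uncompletable (S k) w \<and> int (length w) = 5 * int k ^ 2 - 17 * int k + 13)"
proof -
  have "witness k \<notin> Fact (star (S k))"
  proof (rule not_factor_by_cuts[where I = "cut k"])
    show "0 < k" using assms by simp
    show "\<And>x. x \<in> S k \<Longrightarrow> length x \<le> k" using length_S by fastforce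
    show "\<And>p. p < k \<Longrightarrow> cut k p" using cut_in_prefix by simp
    show "\<And>p. cut k p \<Longrightarrow> p + k \<le> length (witness k)" using cut_room[OF assms] .
    show "\<And>p n. cut k p \<Longrightarrow> p + n \<le> length (witness k) \<Longrightarrow> take n (drop p (witness k)) \<in> S k
            \<Longrightarrow> cut k (p + n)"
      using cut_step[OF assms] .
  qed
  then show ?thesis
    using length_witness_formula[OF assms] unfolding complete_def uncompletable_def by blast
qed

end
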